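(* Suppose all tasks have cost $\ell_{\min}$ or $\ell_{\max}$ ($0<\ell_{\min}<\ell_{\max}$) and $\gamma$n-Burst is run with speedup $s>1$ satisfying $s\ge\frac{\gamma\ell_{\min}+\ell_{\max}}{\ell_{\max}}$, where $\gamma=\lceil\frac{\ell_{\max}-s\ell_{\min}}{(s-1)\ell_{\min}}\rceil$. Then under any adversarial pattern $\mathcal{A}$ and at any time, the number of pending $\ell_{\max}$-tasks in the execution of $\gamma$n-Burst is never larger than the number of pending $\ell_{\max}$-tasks in the execution of OPT plus $n^2+2n$.
   Context: Model: $n$ processors with ids $1,\dots,n$ and a shared repository. An adversarial pattern $\mathcal{A}$ is a set of timed events: task injections (unique id, arrival time, cost), processor crashes and restarts (restarted processors remember only the algorithm and $n$). A task is pending if injected and its completion not yet reported; once reported it is removed. A processor repeatedly obtains the pending set, chooses a task, executes it (a task of cost $\ell$ takes time $\ell/s$ with speedup $s$) and reports it; execution is non-preemptive and a crash loses progress. At any time, reports are processed before injections, which precede requests for the pending set. OPT denotes an optimal offline algorithm: it knows $\mathcal{A}$ in advance, has unlimited computational power, and runs under $\mathcal{A}$ with speedup $1$. Algorithm $\gamma$n-Burst for processor $p$: counter $c$ set to $0$ on (re)start; each cycle it forms lists $L_{\min},L_{\max}$ of pending tasks of cost $\ell_{\min},\ell_{\max}$ sorted by arrival. Case 1 (both lists $<n^2$): if previous task had cost $\ell_{\min}$, perform task at position $(pn)\bmod|L_{\max}|$ of $L_{\max}$, $c\gets0$; else task at position $(pn)\bmod|L_{\min}|$ of $L_{\min}$,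 $c\gets\min(c+1,\gamma)$. Case 2 ($|L_{\min}|\ge n^2>|L_{\max}|$): position $pn$ of $L_{\min}$, $c\gets\min(c+1,\gamma)$. Case 3 ($|L_{\max}|\ge n^2>|L_{\min}|$): position $pn$ of $L_{\max}$, $c\gets0$. Case 4 (both $\ge n^2$): if $c=\gamma$, position $pn$ of $L_{\max}$, $c\gets0$; else position $pn$ of $L_{\min}$, $c\gets\min(c+1,\gamma)$. Then report the task. *)

theory Defs
  imports Complex_Main "HOL-Library.Product_Lexorder"
begin

text \<open>A task is a triple (arrival time, unique id, cost).  The lexicographic order on
  such triples sorts tasks by arrival time, ties broken by id.\<close>
type_synonym task = "real \<times> nat \<times> real"

definition arr :: "task \<Rightarrow> real" where "arr \<tau> = fst \<tau>"
definition tid :: "task \<Rightarrow> nat" where "tid \<tau> = fst (snd \<tau>)"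
definition cost :: "task \<Rightarrow> real" where "cost \<tau> = snd (snd \<tau>)"

record pattern =
  injected :: "task set"
  crashes :: "nat \<Rightarrow> real set"
  restarts :: "nat \<Rightarrow> real set"

definition wf_pattern :: "pattern \<Rightarrow> bool" where
  "wf_pattern A \<longleftrightarrow>
     inj_on tid (injected A) \<and>
     (\<forall>t. finite {\<tau> \<in> injected A. arr \<tau> \<le> t}) \<and>
     (\<forall>p t. finite (crashes A p \<inter> {..t}) \<and> finite (restarts A p \<inter> {..t})) \<and>
     (\<forall>p. crashes A p \<inter> restarts A p = {})"

text \<open>Processor p is alive at time t (all processors start at time 0): every crash at or
  before t has been followed by a restart at or before t.  A crash at time t makes p dead at t.\<close>
definition alive :: "pattern \<Rightarrow> nat \<Rightarrow> real \<Rightarrow> bool" where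
  "alive A p t \<longleftrightarrow> 0 \<le> t \<and>
     (\<forall>c \<in> crashes A p. c \<le> t \<longrightarrow> (\<exists>r \<in> restarts A p. c < r \<and> r \<le> t))"

text \<open>An execution is a set of runs (p, t, task): processor p starts executing the task at time t.
  With speedup s the run takes time cost/s; it is reported at t + cost/s iff p stays alive
  throughout [t, t + cost/s].\<close>
type_synonym run = "nat \<times> real \<times> task"

definition completed :: "pattern \<Rightarrow> real \<Rightarrow> nat \<Rightarrow> real \<Rightarrow> task \<Rightarrow> bool" where
  "completed A s p t \<tau> \<longleftrightarrow> (\<forall>u \<in> {t .. t + cost \<tau> / s}. alive A p u)"

text \<open>Pending set at time t (reports at time t are processed before injections at time t,
  which precede requests at time t).\<close>
definition pending :: "pattern \<Rightarrow> real \<Rightarrow> run set \<Rightarrow> real \<Rightarrow> task set" where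
  "pending A s E t = {\<tau> \<in> injected A. arr \<tau> \<le> t \<and>
      \<not> (\<exists>p t1. (p, t1, \<tau>) \<in> E \<and> completed A s p t1 \<tau> \<and> t1 + cost \<tau> / s \<le> t)}"

definition runs_cover :: "pattern \<Rightarrow> real \<Rightarrow> run set \<Rightarrow> nat \<Rightarrow> real \<Rightarrow> (real \<times> task) set" where
  "runs_cover A s E p t = {(t1, \<tau>1). (p, t1, \<tau>1) \<in> E \<and> t1 \<le> t \<and> t < t1 + cost \<tau>1 / s \<and>
      (\<forall>u \<in> {t1 .. t}. alive A p u)}"

text \<open>Local state: (counter c, whether the previous task had cost l_min).\<close>
definition burst_step :: "real \<Rightarrow> nat \<Rightarrow> real \<Rightarrow> nat \<times> bool \<Rightarrow> nat \<times> bool" where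
  "burst_step lmin \<gamma> l st = (if l = lmin then (min (fst st + 1) \<gamma>, True) else (0, False))"

text \<open>State of p just before its request at time t: fold over the tasks p reported since its
  last (re)start, in order.\<close>
definition burst_state :: "real \<Rightarrow> nat \<Rightarrow> pattern \<Rightarrow> real \<Rightarrow> run set \<Rightarrow> nat \<Rightarrow> real \<Rightarrow> nat \<times> bool" where
  "burst_state lmin \<gamma> A s E p t =
     fold (burst_step lmin \<gamma>)
       (map (cost \<circ> snd) (sorted_list_of_set {(t1, \<tau>1). (p, t1, \<tau>1) \<in> E \<and> t1 < t \<and>
           completed A s p t1 \<tau>1 \<and> (\<forall>u \<in> {t1 .. t}. alive A p u)}))
       (0, False)"

definition burst_choice :: "nat \<Rightarrow> nat \<Rightarrow> real \<Rightarrow> real \<Rightarrow> nat \<Rightarrow> nat \<times> bool \<Rightarrow> task set \<Rightarrow> task" where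
  "burst_choice n \<gamma> lmin lmax p st P =
    (let Lmin = sorted_list_of_set {\<tau> \<in> P. cost \<tau> = lmin};
         Lmax = sorted_list_of_set {\<tau> \<in> P. cost \<tau> = lmax};
         k = n ^ 2
     in if length Lmin < k \<and> length Lmax < k then
          (if (snd st \<and> Lmax \<noteq> []) \<or> Lmin = [] then Lmax ! (p * n mod length Lmax)
           else Lmin ! (p * n mod length Lmin))
        else if length Lmax < k then Lmin ! (p * n - 1)
        else if length Lmin < k then Lmax ! (p * n - 1)
        else if fst st = \<gamma> then Lmax ! (p * n - 1)
        else Lmin ! (p * n - 1))"

definition burst_exec :: "nat \<Rightarrow> nat \<Rightarrow> real \<Rightarrow> real \<Rightarrow> real \<Rightarrow> pattern \<Rightarrow> run set \<Rightarrow> bool" where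
  "burst_exec n \<gamma> lmin lmax s A E \<longleftrightarrow>
     (\<forall>(p, t, \<tau>) \<in> E. p \<in> {1..n} \<and> alive A p t \<and> runs_cover A s E p t = {(t, \<tau>)} \<and>
        pending A s E t \<noteq> {} \<and>
        \<tau> = burst_choice n \<gamma> lmin lmax p (burst_state lmin \<gamma> A s E p t) (pending A s E t)) \<and>
     (\<forall>p \<in> {1..n}. \<forall>t. alive A p t \<and> runs_cover A s E p t = {} \<and> pending A s E t \<noteq> {}
        \<longrightarrow> (\<exists>\<tau>. (p, t, \<tau>) \<in> E))"

text \<open>X is an execution of an arbitrary offline algorithm (in particular OPT) under A with speedup 1,
  recorded by its successful runs: each run executes a pending task on an alive processor until
  it is reported, and runs on the same processor do not overlap.\<close>
definition offline_exec :: "nat \<Rightarrow> pattern \<Rightarrow> run set \<Rightarrow> bool" where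
  "offline_exec n A X \<longleftrightarrow>
     (\<forall>(p, t, \<tau>) \<in> X. p \<in> {1..n} \<and> \<tau> \<in> pending A 1 X t \<and> completed A 1 p t \<tau> \<and>
        (\<forall>t' \<tau>'. (p, t', \<tau>') \<in> X \<and> (t', \<tau>') \<noteq> (t, \<tau>) \<longrightarrow>
            t' + cost \<tau>' \<le> t \<or> t + cost \<tau> \<le> t'))"

end

theory Submission
  imports Defs
begin

text \<open>
  Fix t and suppose that \<gamma>n-Burst has at least n^2 pending lmax-tasks at t.  Let t0 be the
  start of the maximal interval ending at t throughout which this holds; just before t0 fewer
  than n^2 lmax-tasks were pending.  On [t0, t] processor p always takes the (pn)-th
  pending lmax-task when it takes one, so no lmax-task is executed twice, and the
  counter forces an lmax-task after at most \<gamma> consecutive lmin-tasks.  The speedup bound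
  then gives Burst a completed lmax-task on p inside every window of length lmax in
  which p is alive.  Hence every lmax-task that OPT completes on p during [t0, t], except
  possibly the first, is matched by a distinct lmax-task that Burst completes on p during
  [t0, t].  Counting the lmax-tasks pending just before t0 or injected during [t0, t]
  then bounds the excess of Burst over OPT by n^2 + n.
\<close>

section \<open>Ranks in sorted lists\<close>

lemma card_less_sorted_list_of_set_nth:
  fixes S :: "'a::linorder set"
  assumes "finite S" "i < card S"
  shows "card {y \<in> S. y < sorted_list_of_set S ! i} = i"
proof -
  define xs where "xs = sorted_list_of_set S"
  have sorted: "sorted_wrt (<) xs" and len: "length xs = card S" and set: "set xs = S"
    and dist: "distinct xs"
    using assms by (auto simp: xs_def)
  have "{y \<in> S. y < xs ! i} = set (take i xs)"
  proof safe
    fix y assume "y \<in> S" "y < xs ! i"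
    then obtain j where j: "j < length xs" "xs ! j = y" using set by (auto simp: in_set_conv_nth)
    have "j < i"
    proof (rule ccontr)
      assume "\<not> j < i"
      then have "xs ! i \<le> xs ! j" using sorted j len assms(2)
        by (metis not_less order_le_less sorted_wrt_iff_nth_less)
      then show False using j \<open>y < xs ! i\<close> by simp
    qed
    then show "y \<in> set (take i xs)" using j by (auto simp: in_set_conv_nth intro!: exI[of _ j])
  next
    fix y assume "y \<in> set (take i xs)"
    then show "y \<in> S" using set by (meson in_set_takeD)
  next
    fix y assume "y \<in> set (take i xs)"
    then obtain j where "j < i" "xs ! j = y" using len assms(2) by (auto simp: in_set_conv_nth)
    then show "y < xs ! i" using sorted len assms(2) by (metis sorted_wrt_iff_nth_less)
  qed
  moreover have "card (set (take i xs)) = i" using dist len assms(2) by (simp add: distinct_card)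
  ultimately show ?thesis by (simp add: xs_def)
qed

lemma sorted_list_of_set_insert_greatest:
  fixes S :: "'a::linorder set"
  assumes "finite S" "\<forall>y\<in>S. y < x"
  shows "sorted_list_of_set (insert x S) = sorted_list_of_set S @ [x]"
proof -
  have "sorted_list_of_set (insert x S) = insort x (sorted_list_of_set S)"
    using assms by (subst sorted_list_of_set_insert) auto
  also have "\<dots> = sorted_list_of_set S @ [x]"
    using assms by (intro sorted_insort_is_snoc) auto
  finally show ?thesis .
qed

lemma sorted_list_of_set_nth_mem:
  assumes "finite S" "i < card S"
  shows "sorted_list_of_set S ! i \<in> S"
  using assms by (metis length_sorted_list_of_set nth_mem set_sorted_list_of_set)

lemma task_less_imp_arr_le: "(y::task) < \<tau> \<Longrightarrow> arr y \<le> arr \<tau>"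
  by (cases y, cases \<tau>) (auto simp: less_prod_def arr_def)

lemma mult_minus_one_less_square: "1 \<le> p \<Longrightarrow> p \<le> (n::nat) \<Longrightarrow> p * n - 1 < n ^ 2"
proof -
  assume "1 \<le> p" "p \<le> n"
  then have "1 \<le> p * n" "p * n \<le> n * n" by simp_all
  then have "p * n - 1 < n * n" by linarith
  then show ?thesis by (simp add: power2_eq_square)
qed

section \<open>The choice rule of \<gamma>n-Burst\<close>

lemma fst_burst_state_le: "fst (burst_state lmin \<gamma> A s E p t) \<le> \<gamma>"
proof -
  have "fst (fold (burst_step lmin \<gamma>) ls st) \<le> \<gamma>" if "fst st \<le> \<gamma>" for ls st
    using that by (induction ls arbitrary: st) (auto simp: burst_step_def)
  then show ?thesis unfolding burst_state_def by simp
qed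

lemma burst_choice_lmax_many:
  assumes "n ^ 2 \<le> card {\<tau> \<in> P. cost \<tau> = lmax}"
  shows "burst_choice n \<gamma> lmin lmax p st P =
    (if n ^ 2 \<le> card {\<tau> \<in> P. cost \<tau> = lmin} \<and> fst st \<noteq> \<gamma>
     then sorted_list_of_set {\<tau> \<in> P. cost \<tau> = lmin} ! (p * n - 1)
     else sorted_list_of_set {\<tau> \<in> P. cost \<tau> = lmax} ! (p * n - 1))"
  using assms unfolding burst_choice_def Let_def by auto

lemma burst_choice_mem:
  assumes fin: "finite P" and ne: "P \<noteq> {}" and costs: "\<forall>\<tau>\<in>P. cost \<tau> = lmin \<or> cost \<tau> = lmax"
    and p: "1 \<le> p" "p \<le> n"
  shows "burst_choice n \<gamma> lmin lmax p st P \<in> P"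
proof -
  define Lmin where "Lmin = sorted_list_of_set {\<tau> \<in> P. cost \<tau> = lmin}"
  define Lmax where "Lmax = sorted_list_of_set {\<tau> \<in> P. cost \<tau> = lmax}"
  have nth_Lmin: "Lmin ! i \<in> P" if "i < length Lmin" for i
    using that fin sorted_list_of_set_nth_mem[of "{\<tau> \<in> P. cost \<tau> = lmin}" i] by (simp add: Lmin_def)
  have nth_Lmax: "Lmax ! i \<in> P" if "i < length Lmax" for i
    using that fin sorted_list_of_set_nth_mem[of "{\<tau> \<in> P. cost \<tau> = lmax}" i] by (simp add: Lmax_def)
  have "{\<tau> \<in> P. cost \<tau> = lmin} \<noteq> {} \<or> {\<tau> \<in> P. cost \<tau> = lmax} \<noteq> {}"
    using ne costs by blast
  then have "Lmin \<noteq> [] \<or> Lmax \<noteq> []"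
    using fin by (simp add: Lmin_def Lmax_def)
  moreover have "Lmin \<noteq> [] \<Longrightarrow> Lmin ! (p * n mod length Lmin) \<in> P"
    and "Lmax \<noteq> [] \<Longrightarrow> Lmax ! (p * n mod length Lmax) \<in> P"
    using nth_Lmin nth_Lmax by simp_all
  moreover have "p * n - 1 < n ^ 2" using p by (rule mult_minus_one_less_square)
  ultimately show ?thesis
    unfolding burst_choice_def Let_def Lmin_def[symmetric] Lmax_def[symmetric]
    by (auto intro!: nth_Lmin nth_Lmax)
qed

section \<open>Executions\<close>

lemma offline_run:
  assumes "offline_exec n A X" "(p, w, \<tau>) \<in> X"
  shows "p \<in> {1..n}" "completed A 1 p w \<tau>"
    "\<And>w' \<tau>'. (p, w', \<tau>') \<in> X \<Longrightarrow> (w', \<tau>') \<noteq> (w, \<tau>) \<Longrightarrow> w' + cost \<tau>' \<le> w \<or> w + cost \<tau> \<le> w'"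
  using assms unfolding offline_exec_def by fastforce+

locale burst_execution =
  fixes n \<gamma> :: nat and lmin lmax s :: real and A :: pattern and E :: "run set"
  assumes n_pos: "n \<ge> 1" and lmin_pos: "0 < lmin" and lmin_less_lmax: "lmin < lmax"
    and speedup: "s > 1" and speedup_bound: "s \<ge> (real \<gamma> * lmin + lmax) / lmax"
    and wf: "wf_pattern A"
    and costs: "\<forall>\<tau> \<in> injected A. cost \<tau> = lmin \<or> cost \<tau> = lmax"
    and exec: "burst_exec n \<gamma> lmin lmax s A E"
begin

abbreviation "pend u \<equiv> pending A s E u"
abbreviation "pend_lmax u \<equiv> {\<tau> \<in> pend u. cost \<tau> = lmax}"
abbreviation "pend_lmin u \<equiv> {\<tau> \<in> pend u. cost \<tau> = lmin}"
abbreviation "state p u \<equiv> burst_state lmin \<gamma> A s E p u"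

lemma s_pos: "s > 0"
  using speedup by simp

lemma run_conditions:
  assumes "(p, u, \<tau>) \<in> E"
  shows "p \<in> {1..n}" "alive A p u" "runs_cover A s E p u = {(u, \<tau>)}" "pend u \<noteq> {}"
    "\<tau> = burst_choice n \<gamma> lmin lmax p (state p u) (pend u)"
  using exec assms unfolding burst_exec_def by fastforce+

lemma idle_processor_starts_run:
  assumes "p \<in> {1..n}" "alive A p u" "runs_cover A s E p u = {}" "pend u \<noteq> {}"
  shows "\<exists>\<tau>. (p, u, \<tau>) \<in> E"
  using exec assms unfolding burst_exec_def by blast

lemma pending_iff:
  "\<tau> \<in> pend u \<longleftrightarrow> \<tau> \<in> injected A \<and> arr \<tau> \<le> u \<and>
     \<not> (\<exists>p t1. (p, t1, \<tau>) \<in> E \<and> completed A s p t1 \<tau> \<and> t1 + cost \<tau> / s \<le> u)"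
  unfolding pending_def by auto

lemma finite_injected_upto: "finite {\<tau> \<in> injected A. arr \<tau> \<le> t}"
  using wf unfolding wf_pattern_def by blast

lemma finite_pending: "finite (pend u)"
  by (rule finite_subset[OF _ finite_injected_upto[of u]]) (auto simp: pending_iff)

lemma run_task_pending:
  assumes run: "(p, u, \<tau>) \<in> E"
  shows "\<tau> \<in> pend u"
proof -
  have "1 \<le> p" "p \<le> n" using run_conditions(1)[OF run] by auto
  moreover have "\<forall>\<sigma>\<in>pend u. cost \<sigma> = lmin \<or> cost \<sigma> = lmax" using costs by (simp add: pending_iff)
  ultimately show ?thesis
    using burst_choice_mem[OF finite_pending run_conditions(4)[OF run]] run_conditions(5)[OF run]
    by simp
qed

lemma run_task_cost:
  assumes "(p, u, \<tau>) \<in> E"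
  shows "cost \<tau> = lmin \<or> cost \<tau> = lmax" "lmin \<le> cost \<tau>" "cost \<tau> \<le> lmax" "0 < cost \<tau>"
    "0 < cost \<tau> / s"
proof -
  show cost: "cost \<tau> = lmin \<or> cost \<tau> = lmax"
    using run_task_pending[OF assms] costs by (auto simp: pending_iff)
  then show "lmin \<le> cost \<tau>" "cost \<tau> \<le> lmax" "0 < cost \<tau>"
    using lmin_pos lmin_less_lmax by auto
  then show "0 < cost \<tau> / s" using s_pos by simp
qed

lemma completed_alive:
  "completed A s p a x \<Longrightarrow> a \<le> b \<Longrightarrow> b \<le> a + cost x / s \<Longrightarrow> alive A p b"
  unfolding completed_def by auto

lemma completed_run_blocks_start:
  assumes "(p, a, x) \<in> E" "(p, b, y) \<in> E" "completed A s p a x" "a \<le> b" "b < a + cost x / s"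
  shows "a = b \<and> x = y"
proof -
  have "(a, x) \<in> runs_cover A s E p b"
    unfolding runs_cover_def using assms by (auto intro: completed_alive)
  then show ?thesis using run_conditions(3)[OF assms(2)] by auto
qed

lemma completed_runs_disjoint:
  assumes "(p, a, x) \<in> E" "(p, b, y) \<in> E" "completed A s p a x" "completed A s p b y"
    and "(a, x) \<noteq> (b, y)"
  shows "a + cost x / s \<le> b \<or> b + cost y / s \<le> a"
  using completed_run_blocks_start[of p a x b y] completed_run_blocks_start[of p b y a x] assms
  by force

lemma run_unique_at_start: "(p, a, x) \<in> E \<Longrightarrow> (p, a, y) \<in> E \<Longrightarrow> x = y"
  using run_conditions(3) by blast

text \<open>Completed runs on one processor are \<open>\<ge> lmin/s\<close> apart, so \<open>\<lfloor>u s/lmin\<rfloor>\<close> separates them.\<close>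
lemma finite_completed_runs_upto:
  "finite {(u, \<tau>). (p, u, \<tau>) \<in> E \<and> completed A s p u \<tau> \<and> u \<le> T}"
proof -
  let ?R = "{(u, \<tau>). (p, u, \<tau>) \<in> E \<and> completed A s p u \<tau> \<and> u \<le> T}"
  define f where "f = (\<lambda>(u::real, \<tau>::task). nat \<lfloor>u * s / lmin\<rfloor>)"
  have inj: "inj_on f ?R"
  proof (rule inj_onI, rule ccontr)
    fix r1 r2 assume r: "r1 \<in> ?R" "r2 \<in> ?R" "f r1 = f r2" "r1 \<noteq> r2"
    obtain a1 x1 a2 x2 where rr: "r1 = (a1, x1)" "r2 = (a2, x2)" by (cases r1, cases r2)
    have run1: "(p, a1, x1) \<in> E" "completed A s p a1 x1"
      and run2: "(p, a2, x2) \<in> E" "completed A s p a2 x2"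
      using r rr by auto
    have nonneg: "0 \<le> a1" "0 \<le> a2"
      using run_conditions(2)[OF run1(1)] run_conditions(2)[OF run2(1)] by (auto simp: alive_def)
    have "lmin / s \<le> cost x1 / s" "lmin / s \<le> cost x2 / s"
      using run_task_cost(2)[OF run1(1)] run_task_cost(2)[OF run2(1)] s_pos
      by (simp_all add: divide_right_mono)
    then have apart: "a1 + lmin / s \<le> a2 \<or> a2 + lmin / s \<le> a1"
      using completed_runs_disjoint[OF run1(1) run2(1) run1(2) run2(2)] r(4) rr by auto
    have scaled: "x * s / lmin + 1 \<le> y * s / lmin" if "x + lmin / s \<le> y" for x y
    proof -
      have "(x + lmin / s) * s / lmin \<le> y * s / lmin"
        using that s_pos lmin_pos by (intro divide_right_mono mult_right_mono) auto
      moreover have "(x + lmin / s) * s / lmin = x * s / lmin + 1"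
        using s_pos lmin_pos by (simp add: field_simps)
      ultimately show ?thesis by simp
    qed
    from apart have "\<lfloor>a1 * s / lmin\<rfloor> \<noteq> \<lfloor>a2 * s / lmin\<rfloor>"
      using scaled[of a1 a2] scaled[of a2 a1] by linarith
    moreover have "0 \<le> \<lfloor>a1 * s / lmin\<rfloor>" "0 \<le> \<lfloor>a2 * s / lmin\<rfloor>"
      using nonneg s_pos lmin_pos by auto
    ultimately have "f r1 \<noteq> f r2" unfolding f_def rr by (simp add: nat_eq_iff2)
    then show False using r by simp
  qed
  have "f ` ?R \<subseteq> {..nat \<lfloor>T * s / lmin\<rfloor>}"
  proof
    fix y assume "y \<in> f ` ?R"
    then obtain a x where "(a, x) \<in> ?R" "y = nat \<lfloor>a * s / lmin\<rfloor>" by (auto simp: f_def)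
    moreover from this have "a * s / lmin \<le> T * s / lmin"
      using s_pos lmin_pos by (simp add: divide_right_mono mult_right_mono)
    ultimately show "y \<in> {..nat \<lfloor>T * s / lmin\<rfloor>}" by (simp add: floor_mono nat_mono)
  qed
  then show ?thesis using inj finite_subset finite_imageD by blast
qed

definition reported_runs :: "nat \<Rightarrow> real \<Rightarrow> (real \<times> task) set" where
  "reported_runs p u = {(t1, \<tau>1). (p, t1, \<tau>1) \<in> E \<and> t1 < u \<and> completed A s p t1 \<tau>1 \<and>
     (\<forall>x\<in>{t1..u}. alive A p x)}"

lemma burst_state_reported_runs:
  "state p u = fold (burst_step lmin \<gamma>) (map (cost \<circ> snd) (sorted_list_of_set (reported_runs p u))) (0, False)"
  unfolding burst_state_def reported_runs_def by simp

lemma finite_reported_runs: "finite (reported_runs p u)"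
  by (rule finite_subset[OF _ finite_completed_runs_upto[of p u]]) (auto simp: reported_runs_def)

lemma reported_runs_after_completion:
  assumes run: "(p, u, \<tau>) \<in> E" and compl: "completed A s p u \<tau>"
  shows "reported_runs p (u + cost \<tau> / s) = insert (u, \<tau>) (reported_runs p u)"
proof (rule set_eqI, rule iffI)
  let ?e = "u + cost \<tau> / s"
  have dur: "0 < cost \<tau> / s" using run_task_cost(5)[OF run] .
  fix z
  {
    assume "z \<in> reported_runs p ?e"
    then obtain t1 \<tau>1 where z: "z = (t1, \<tau>1)" "(p, t1, \<tau>1) \<in> E" "t1 < ?e"
      "completed A s p t1 \<tau>1" "\<forall>x\<in>{t1..?e}. alive A p x"
      by (auto simp: reported_runs_def)
    consider "t1 < u" | "t1 = u" | "u < t1" by linarith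
    then show "z \<in> insert (u, \<tau>) (reported_runs p u)"
    proof cases
      case 1
      then show ?thesis using z dur by (auto simp: reported_runs_def)
    next
      case 2
      then show ?thesis using run_unique_at_start[OF run] z by auto
    next
      case 3
      then show ?thesis using completed_run_blocks_start[OF run z(2) compl] z by auto
    qed
  }
  {
    assume z: "z \<in> insert (u, \<tau>) (reported_runs p u)"
    show "z \<in> reported_runs p ?e"
    proof (cases "z = (u, \<tau>)")
      case True
      then show ?thesis using run compl dur unfolding reported_runs_def completed_def by auto
    next
      case False
      then obtain t1 \<tau>1 where zz: "z = (t1, \<tau>1)" "(p, t1, \<tau>1) \<in> E" "t1 < u"
        "completed A s p t1 \<tau>1" "\<forall>x\<in>{t1..u}. alive A p x"
        using z by (auto simp: reported_runs_def)
      have "\<forall>x\<in>{t1..?e}. alive A p x"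
        using zz(5) compl unfolding completed_def by (metis atLeastAtMost_iff linorder_le_cases)
      then show ?thesis using zz dur by (auto simp: reported_runs_def)
    qed
  }
qed

lemma burst_state_after_completion:
  assumes "(p, u, \<tau>) \<in> E" "completed A s p u \<tau>"
  shows "state p (u + cost \<tau> / s) = burst_step lmin \<gamma> (cost \<tau>) (state p u)"
proof -
  have "\<forall>y\<in>reported_runs p u. y < (u, \<tau>)" by (auto simp: reported_runs_def)
  then have "sorted_list_of_set (reported_runs p (u + cost \<tau> / s)) =
      sorted_list_of_set (reported_runs p u) @ [(u, \<tau>)]"
    using reported_runs_after_completion[OF assms]
      sorted_list_of_set_insert_greatest[OF finite_reported_runs] by simp
  then show ?thesis unfolding burst_state_reported_runs by simp
qed

lemma alive_processor_busy:
  assumes p: "p \<in> {1..n}" and al: "alive A p w" and ne: "pend w \<noteq> {}"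
  shows "\<exists>v \<sigma>. (p, v, \<sigma>) \<in> E \<and> v \<le> w \<and> w < v + cost \<sigma> / s \<and> (\<forall>x\<in>{v..w}. alive A p x)"
proof (cases "runs_cover A s E p w = {}")
  case True
  then obtain \<sigma> where "(p, w, \<sigma>) \<in> E" using idle_processor_starts_run[OF p al _ ne] by blast
  then show ?thesis using al run_task_cost(5) by (intro exI[of _ w] exI[of _ \<sigma>]) auto
next
  case False
  then show ?thesis unfolding runs_cover_def by blast
qed

lemma run_after_completion:
  assumes run: "(p, v, \<tau>) \<in> E" and compl: "completed A s p v \<tau>"
    and ne: "pend (v + cost \<tau> / s) \<noteq> {}"
  shows "\<exists>\<sigma>. (p, v + cost \<tau> / s, \<sigma>) \<in> E"
proof -
  let ?e = "v + cost \<tau> / s"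
  have ve: "v \<le> ?e" using run_task_cost(5)[OF run] by simp
  then have al: "alive A p ?e" using compl unfolding completed_def by auto
  show ?thesis
  proof (cases "runs_cover A s E p ?e = {}")
    case True
    then show ?thesis using idle_processor_starts_run[OF run_conditions(1)[OF run] al _ ne] by blast
  next
    case False
    then obtain t1 \<tau>1 where cv: "(p, t1, \<tau>1) \<in> E" "t1 \<le> ?e" "?e < t1 + cost \<tau>1 / s"
      "\<forall>x\<in>{t1..?e}. alive A p x"
      unfolding runs_cover_def by auto
    have "t1 = ?e"
    proof (rule ccontr)
      assume "t1 \<noteq> ?e"
      then have lt: "t1 < ?e" using cv by simp
      show False
      proof (cases "v \<le> t1")
        case True
        then show False using completed_run_blocks_start[OF run cv(1) compl True lt] cv(3) by simp
      next
        case False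
        then have "(t1, \<tau>1) \<in> runs_cover A s E p v"
          unfolding runs_cover_def using cv ve by auto
        then show False using run_conditions(3)[OF run] False by auto
      qed
    qed
    then show ?thesis using cv by blast
  qed
qed

section \<open>Overloaded intervals\<close>

definition lmax_overloaded :: "real \<Rightarrow> real \<Rightarrow> bool" where
  "lmax_overloaded t0 t \<longleftrightarrow> (\<forall>v\<in>{t0..t}. n ^ 2 \<le> card (pend_lmax v))"

lemma pending_nonempty_if_lmax_many:
  assumes "n ^ 2 \<le> card (pend_lmax v)"
  shows "pend v \<noteq> {}"
proof -
  have "0 < n ^ 2" using n_pos by simp
  then have "0 < card (pend_lmax v)" using assms by linarith
  then show ?thesis by auto
qed

lemma run_choice_lmax_many:
  assumes run: "(p, u, \<tau>) \<in> E" and many: "n ^ 2 \<le> card (pend_lmax u)"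
  shows "(cost \<tau> = lmax \<and> \<tau> = sorted_list_of_set (pend_lmax u) ! (p * n - 1)) \<or>
         (cost \<tau> = lmin \<and> fst (state p u) < \<gamma>)"
proof -
  have idx: "p * n - 1 < n ^ 2"
    using run_conditions(1)[OF run] by (intro mult_minus_one_less_square) auto
  have fin: "finite (pend_lmax u)" "finite (pend_lmin u)" using finite_pending by auto
  have choice: "\<tau> = (if n ^ 2 \<le> card (pend_lmin u) \<and> fst (state p u) \<noteq> \<gamma>
      then sorted_list_of_set (pend_lmin u) ! (p * n - 1)
      else sorted_list_of_set (pend_lmax u) ! (p * n - 1))"
    using run_conditions(5)[OF run] burst_choice_lmax_many[OF many] by simp
  show ?thesis
  proof (cases "n ^ 2 \<le> card (pend_lmin u) \<and> fst (state p u) \<noteq> \<gamma>")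
    case True
    then have "\<tau> \<in> pend_lmin u" using choice sorted_list_of_set_nth_mem[OF fin(2)] idx by auto
    then show ?thesis using True fst_burst_state_le[of lmin \<gamma> A s E p u] by auto
  next
    case False
    then have "\<tau> = sorted_list_of_set (pend_lmax u) ! (p * n - 1)" using choice by argo
    moreover from this have "\<tau> \<in> pend_lmax u"
      using sorted_list_of_set_nth_mem[OF fin(1)] idx many by auto
    ultimately show ?thesis by auto
  qed
qed

text \<open>k = \<gamma> - c bounds the lmin-runs p may take before the counter c forces an lmax-run.\<close>
lemma lmax_run_within_counter_window:
  assumes overload: "lmax_overloaded t0 t"
  shows "(p, u, \<tau>) \<in> E \<Longrightarrow> t0 \<le> u \<Longrightarrow> k = \<gamma> - fst (state p u) \<Longrightarrow>
    u + (real k * lmin + lmax) / s \<le> t \<Longrightarrow>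
    (\<forall>x\<in>{u..u + (real k * lmin + lmax) / s}. alive A p x) \<Longrightarrow>
    \<exists>u' \<tau>'. (p, u', \<tau>') \<in> E \<and> cost \<tau>' = lmax \<and> completed A s p u' \<tau>' \<and> u \<le> u' \<and>
       u' + lmax / s \<le> u + (real k * lmin + lmax) / s \<and> ((u' = u \<and> \<tau>' = \<tau>) \<or> u + cost \<tau> / s \<le> u')"
proof (induction k arbitrary: u \<tau>)
  case 0
  have "0 < lmax / s" using lmin_pos lmin_less_lmax s_pos by simp
  then have "n ^ 2 \<le> card (pend_lmax u)" using overload 0 unfolding lmax_overloaded_def by auto
  then have "cost \<tau> = lmax" using run_choice_lmax_many[OF 0(1)] 0(3) by auto
  moreover have "completed A s p u \<tau>" unfolding completed_def using 0(5) \<open>cost \<tau> = lmax\<close> by auto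
  ultimately show ?case using 0 by (intro exI[of _ u] exI[of _ \<tau>]) auto
next
  case (Suc k)
  have "0 \<le> real k * lmin" using lmin_pos by simp
  then have "lmax \<le> real (Suc k) * lmin + lmax" "lmin \<le> real (Suc k) * lmin + lmax"
    using lmin_pos lmin_less_lmax by (simp_all add: algebra_simps)
  then have lmax_le: "lmax / s \<le> (real (Suc k) * lmin + lmax) / s"
    and lmin_le: "lmin / s \<le> (real (Suc k) * lmin + lmax) / s"
    using s_pos by (simp_all add: divide_right_mono)
  have "0 < lmin / s" using lmin_pos s_pos by simp
  then have "u \<le> t" using Suc(5) lmin_le by linarith
  then have "n ^ 2 \<le> card (pend_lmax u)" using overload Suc(3) unfolding lmax_overloaded_def by auto
  from run_choice_lmax_many[OF Suc(2) this] show ?case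
  proof
    assume lmax: "cost \<tau> = lmax \<and> \<tau> = sorted_list_of_set (pend_lmax u) ! (p * n - 1)"
    then have "completed A s p u \<tau>" unfolding completed_def using Suc(6) lmax_le by auto
    then show ?thesis using Suc(2) lmax lmax_le by (intro exI[of _ u] exI[of _ \<tau>]) auto
  next
    assume lmin: "cost \<tau> = lmin \<and> fst (state p u) < \<gamma>"
    let ?e = "u + lmin / s"
    have compl: "completed A s p u \<tau>" unfolding completed_def using Suc(6) lmin lmin_le by auto
    have ue: "u \<le> ?e" using lmin_pos s_pos by simp
    have "?e \<le> t" using Suc(5) lmin_le by simp
    then have "pend ?e \<noteq> {}"
      using pending_nonempty_if_lmax_many overload Suc(3) ue unfolding lmax_overloaded_def by auto
    then obtain \<sigma> where next_run: "(p, ?e, \<sigma>) \<in> E"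
      using run_after_completion[OF Suc(2) compl] lmin by auto
    have "state p ?e = burst_step lmin \<gamma> lmin (state p u)"
      using burst_state_after_completion[OF Suc(2) compl] lmin by simp
    then have k: "k = \<gamma> - fst (state p ?e)" using Suc(4) lmin by (simp add: burst_step_def)
    have window: "?e + (real k * lmin + lmax) / s = u + (real (Suc k) * lmin + lmax) / s"
      using s_pos by (simp add: field_simps)
    have "\<forall>x\<in>{?e..?e + (real k * lmin + lmax) / s}. alive A p x"
      using Suc(6) ue window by auto
    then obtain u' \<tau>' where u': "(p, u', \<tau>') \<in> E" "cost \<tau>' = lmax" "completed A s p u' \<tau>'"
      "?e \<le> u'" "u' + lmax / s \<le> ?e + (real k * lmin + lmax) / s"
      using Suc.IH[OF next_run _ k] Suc(3,5) ue window by fastforce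
    then show ?thesis using ue window lmin by (intro exI[of _ u'] exI[of _ \<tau>']) auto
  qed
qed

lemma counter_window_le_lmax:
  assumes "k \<le> \<gamma>"
  shows "(real k * lmin + lmax) / s \<le> lmax"
proof -
  have "real k * lmin \<le> real \<gamma> * lmin" using assms lmin_pos by (simp add: mult_right_mono)
  moreover have "real \<gamma> * lmin + lmax \<le> s * lmax"
    using speedup_bound lmin_less_lmax lmin_pos by (simp add: pos_divide_le_eq)
  ultimately show ?thesis using s_pos by (simp add: pos_divide_le_eq mult.commute)
qed

lemma lmax_completion_within_lmax:
  assumes overload: "lmax_overloaded t0 t"
    and p: "p \<in> {1..n}" and al: "\<forall>x\<in>{w..w + lmax}. alive A p x"
    and t0w: "t0 + lmax / s \<le> w" and wt: "w + lmax \<le> t"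
  shows "\<exists>u' \<tau>'. (p, u', \<tau>') \<in> E \<and> cost \<tau>' = lmax \<and> completed A s p u' \<tau>' \<and> t0 \<le> u' \<and>
           w < u' + lmax / s \<and> u' + lmax / s \<le> w + lmax"
proof -
  have lmax_s: "lmax / s > 0" using lmin_pos lmin_less_lmax s_pos by simp
  have "alive A p w" using al lmin_less_lmax lmin_pos by auto
  moreover have "pend w \<noteq> {}"
    using pending_nonempty_if_lmax_many overload t0w wt lmax_s lmin_pos lmin_less_lmax
    unfolding lmax_overloaded_def by auto
  ultimately obtain v \<sigma> where cv: "(p, v, \<sigma>) \<in> E" "v \<le> w" "w < v + cost \<sigma> / s"
    "\<forall>x\<in>{v..w}. alive A p x"
    using alive_processor_busy[OF p] by blast
  have "cost \<sigma> / s \<le> lmax / s" using run_task_cost(3)[OF cv(1)] s_pos by (simp add: divide_right_mono)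
  then have t0v: "t0 \<le> v" using cv(3) t0w by linarith
  define k where "k = \<gamma> - fst (state p v)"
  have window: "(real k * lmin + lmax) / s \<le> lmax" using counter_window_le_lmax by (simp add: k_def)
  have "\<forall>x\<in>{v..v + (real k * lmin + lmax) / s}. alive A p x"
  proof
    fix x assume x: "x \<in> {v..v + (real k * lmin + lmax) / s}"
    show "alive A p x"
    proof (cases "x \<le> w")
      case True
      then show ?thesis using cv(4) x by auto
    next
      case False
      then show ?thesis using al x window cv(2) by auto
    qed
  qed
  then obtain u' \<tau>' where u': "(p, u', \<tau>') \<in> E" "cost \<tau>' = lmax" "completed A s p u' \<tau>'" "v \<le> u'"
    "u' + lmax / s \<le> v + (real k * lmin + lmax) / s" "(u' = v \<and> \<tau>' = \<sigma>) \<or> v + cost \<sigma> / s \<le> u'"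
    using lmax_run_within_counter_window[OF overload cv(1) t0v k_def] window cv(2) wt by fastforce
  have "w < u' + lmax / s" using u'(2,6) cv(3) lmax_s by auto
  then show ?thesis using u' window cv(2) t0v by (intro exI[of _ u'] exI[of _ \<tau>']) auto
qed

text \<open>
  The lmax-tasks completed in (u, v] ran on pairwise different processors other than p,
  because v - u is shorter than an lmax-run.
\<close>
lemma card_lmax_completed_during_run:
  assumes run: "(p, u, \<tau>) \<in> E" and compl: "completed A s p u \<tau>" and lmax: "cost \<tau> = lmax"
    and uv: "u \<le> v" "v < u + lmax / s" and pend_v: "\<tau> \<in> pend v"
  shows "card {x \<in> pend_lmax u. x \<notin> pend v} \<le> n - 1"
proof -
  define D where "D = {x \<in> pend_lmax u. x \<notin> pend v}"
  have "\<forall>x\<in>D. \<exists>r. (fst r, snd r, x) \<in> E \<and> completed A s (fst r) (snd r) x \<and>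
      u < snd r + lmax / s \<and> snd r + lmax / s \<le> v"
  proof
    fix x assume "x \<in> D"
    then have x: "x \<in> pend u" "x \<notin> pend v" "cost x = lmax" by (auto simp: D_def)
    then have "x \<in> injected A" "arr x \<le> v" using uv(1) by (auto simp: pending_iff)
    then obtain q w where qw: "(q, w, x) \<in> E" "completed A s q w x" "w + cost x / s \<le> v"
      using x(2) unfolding pending_iff by blast
    moreover have "\<not> w + cost x / s \<le> u" using x(1) qw(1,2) unfolding pending_iff by blast
    ultimately show "\<exists>r. (fst r, snd r, x) \<in> E \<and> completed A s (fst r) (snd r) x \<and>
        u < snd r + lmax / s \<and> snd r + lmax / s \<le> v"
      using x(3) by (intro exI[of _ "(q, w)"]) auto
  qed
  then obtain q w where "\<forall>x\<in>D. (q x, w x, x) \<in> E \<and> completed A s (q x) (w x) x \<and>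
      u < w x + lmax / s \<and> w x + lmax / s \<le> v"
    by (auto dest!: bchoice)
  then have r: "\<And>x. x \<in> D \<Longrightarrow> (q x, w x, x) \<in> E \<and> completed A s (q x) (w x) x \<and>
      u < w x + lmax / s \<and> w x + lmax / s \<le> v"
    by blast
  have lmax_D: "\<And>x. x \<in> D \<Longrightarrow> cost x = lmax" by (simp add: D_def)
  have "inj_on q D"
  proof (rule inj_onI, rule ccontr)
    fix x y assume xy: "x \<in> D" "y \<in> D" "q x = q y" "x \<noteq> y"
    then have "w x + lmax / s \<le> w y \<or> w y + lmax / s \<le> w x"
      using completed_runs_disjoint[of "q x" "w x" x "w y" y] r[OF xy(1)] r[OF xy(2)]
        lmax_D[OF xy(1)] lmax_D[OF xy(2)]
      by auto
    then show False using r[OF xy(1)] r[OF xy(2)] uv by auto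
  qed
  moreover have "q ` D \<subseteq> {1..n} - {p}"
  proof
    fix z assume "z \<in> q ` D"
    then obtain x where x: "x \<in> D" "z = q x" by auto
    have "x \<noteq> \<tau>" using x(1) pend_v by (auto simp: D_def)
    have "z \<noteq> p"
    proof
      assume "z = p"
      then have "w x + lmax / s \<le> u \<or> u + lmax / s \<le> w x"
        using completed_runs_disjoint[OF _ run _ compl, of "w x" x] r[OF x(1)] x(2)
          \<open>x \<noteq> \<tau>\<close> lmax lmax_D[OF x(1)]
        by auto
      then show False using r[OF x(1)] uv by auto
    qed
    then show "z \<in> {1..n} - {p}" using run_conditions(1)[of z "w x" x] r[OF x(1)] x(2) by auto
  qed
  ultimately have "card D \<le> card ({1..n} - {p})" by (intro card_inj_on_le) auto
  then show ?thesis using run_conditions(1)[OF run] by (simp add: D_def)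
qed

lemma card_pending_lmax_below_lmax_run:
  assumes run: "(p, u, \<tau>) \<in> E" and lmax: "cost \<tau> = lmax" and many: "n ^ 2 \<le> card (pend_lmax u)"
  shows "card {y \<in> pend_lmax u. y < \<tau>} = p * n - 1"
proof -
  have "\<tau> = sorted_list_of_set (pend_lmax u) ! (p * n - 1)"
    using run_choice_lmax_many[OF run many] lmax lmin_less_lmax by auto
  moreover have "p * n - 1 < card (pend_lmax u)"
    using mult_minus_one_less_square[of p n] run_conditions(1)[OF run] many by auto
  ultimately show ?thesis
    using card_less_sorted_list_of_set_nth[of "pend_lmax u" "p * n - 1"] finite_pending by simp
qed

text \<open>
  While overloaded, no lmax-task is executed twice: if q took the task at rank qn after p
  took it at rank pn, then q < p and at least n higher-ranked tasks were completed meanwhile.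
\<close>
lemma lmax_overloaded_run_unique:
  assumes overload: "lmax_overloaded t0 t"
    and run1: "(p, u, \<tau>) \<in> E" and run2: "(q, v, \<tau>) \<in> E" and lmax: "cost \<tau> = lmax"
    and compl: "completed A s p u \<tau>" and t0u: "t0 \<le> u" and uv: "u \<le> v" and vt: "v \<le> t"
  shows "p = q \<and> u = v"
proof -
  have pend_v: "\<tau> \<in> pend v" using run_task_pending[OF run2] .
  then have "\<not> u + cost \<tau> / s \<le> v" using run1 compl unfolding pending_iff by blast
  then have vu_cost: "v < u + cost \<tau> / s" by simp
  then have vu: "v < u + lmax / s" using lmax by simp
  show ?thesis
  proof (rule ccontr)
    assume neq: "\<not> (p = q \<and> u = v)"
    have "p \<noteq> q"
    proof
      assume "p = q"
      then have "(p, v, \<tau>) \<in> E" using run2 by simp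
      then have "u = v" using completed_run_blocks_start[OF run1 _ compl uv vu_cost] by blast
      then show False using neq \<open>p = q\<close> by simp
    qed
    have many: "n ^ 2 \<le> card (pend_lmax u)" "n ^ 2 \<le> card (pend_lmax v)"
      using overload t0u uv vt unfolding lmax_overloaded_def by auto
    define Bu where "Bu = {y \<in> pend_lmax u. y < \<tau>}"
    define Bv where "Bv = {y \<in> pend_lmax v. y < \<tau>}"
    have card_Bu: "card Bu = p * n - 1"
      unfolding Bu_def using card_pending_lmax_below_lmax_run[OF run1 lmax many(1)] .
    have card_Bv: "card Bv = q * n - 1"
      unfolding Bv_def using card_pending_lmax_below_lmax_run[OF run2 lmax many(2)] .
    have "arr \<tau> \<le> u" using run_task_pending[OF run1] by (simp add: pending_iff)
    have "Bv \<subseteq> Bu"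
    proof
      fix y assume "y \<in> Bv"
      then have y: "y \<in> pend v" "cost y = lmax" "y < \<tau>" by (auto simp: Bv_def)
      have "arr y \<le> u" using task_less_imp_arr_le[OF y(3)] \<open>arr \<tau> \<le> u\<close> by linarith
      moreover have "y \<in> injected A"
        and not_done: "\<not> (\<exists>p t1. (p, t1, y) \<in> E \<and> completed A s p t1 y \<and> t1 + cost y / s \<le> v)"
        using y(1) by (simp_all add: pending_iff)
      moreover have "\<not> (\<exists>p t1. (p, t1, y) \<in> E \<and> completed A s p t1 y \<and> t1 + cost y / s \<le> u)"
        using not_done uv by (meson order_trans)
      ultimately have "y \<in> pend u" by (simp add: pending_iff)
      then show "y \<in> Bu" using y by (simp add: Bu_def)
    qed
    moreover have fin_Bu: "finite Bu" using finite_pending by (simp add: Bu_def)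
    ultimately have Bv_le: "card Bv \<le> card Bu" and "card (Bu - Bv) = card Bu - card Bv"
      by (auto intro: card_Diff_subset finite_subset card_mono)
    moreover have "card (Bu - Bv) \<le> card {x \<in> pend_lmax u. x \<notin> pend v}"
      using finite_pending by (intro card_mono) (auto simp: Bu_def Bv_def)
    ultimately have "(p * n - 1) - (q * n - 1) \<le> n - 1"
      using card_lmax_completed_during_run[OF run1 compl lmax uv vu pend_v] card_Bu card_Bv
      by simp
    moreover have "1 \<le> q * n" "1 \<le> p * n"
      using run_conditions(1)[OF run1] run_conditions(1)[OF run2] n_pos by simp_all
    moreover have "q * n \<le> p * n" using Bv_le card_Bu card_Bv \<open>1 \<le> q * n\<close> \<open>1 \<le> p * n\<close> by arith
    then have "q < p" using \<open>p \<noteq> q\<close> n_pos by simp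
    then have "q * n + n \<le> p * n" by (metis Suc_leI add.commute mult_Suc mult_le_mono1)
    ultimately show False using n_pos by arith
  qed
qed

definition completion_times :: "real \<Rightarrow> real set" where
  "completion_times t = (\<lambda>(p, u, \<tau>). u + cost \<tau> / s) `
     {(p, u, \<tau>). (p, u, \<tau>) \<in> E \<and> completed A s p u \<tau> \<and> u + cost \<tau> / s \<le> t}"

definition event_times :: "real \<Rightarrow> real set" where
  "event_times t = arr ` {\<tau> \<in> injected A. arr \<tau> \<le> t} \<union> completion_times t"

definition pending_before :: "real \<Rightarrow> task set" where
  "pending_before e = {\<tau> \<in> injected A. arr \<tau> < e \<and>
     \<not> (\<exists>p t1. (p, t1, \<tau>) \<in> E \<and> completed A s p t1 \<tau> \<and> t1 + cost \<tau> / s < e)}"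

lemma arr_mem_event_times: "\<tau> \<in> injected A \<Longrightarrow> arr \<tau> \<le> t \<Longrightarrow> arr \<tau> \<in> event_times t"
  unfolding event_times_def by blast

lemma completion_mem_event_times:
  "(p, u, \<tau>) \<in> E \<Longrightarrow> completed A s p u \<tau> \<Longrightarrow> u + cost \<tau> / s \<le> t \<Longrightarrow>
     u + cost \<tau> / s \<in> event_times t"
  unfolding event_times_def completion_times_def by (intro UnI2 image_eqI[where x = "(p, u, \<tau>)"]) auto

lemma event_times_le: "e \<in> event_times t \<Longrightarrow> e \<le> t"
  unfolding event_times_def completion_times_def by auto

lemma finite_event_times: "finite (event_times t)"
proof -
  have "{(p, u, \<tau>). (p, u, \<tau>) \<in> E \<and> completed A s p u \<tau> \<and> u + cost \<tau> / s \<le> t} \<subseteq>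
      (\<Union>p\<in>{1..n}. Pair p ` {(u, \<tau>). (p, u, \<tau>) \<in> E \<and> completed A s p u \<tau> \<and> u \<le> t})"
    using run_conditions(1) run_task_cost(5) by fastforce
  moreover have "finite (\<Union>p\<in>{1..n}. Pair p ` {(u, \<tau>). (p, u, \<tau>) \<in> E \<and> completed A s p u \<tau> \<and> u \<le> t})"
    using finite_completed_runs_upto by blast
  ultimately show ?thesis
    unfolding event_times_def completion_times_def
    using finite_injected_upto finite_subset by blast
qed

lemma pending_eq_without_events:
  assumes "a \<le> b" "b \<le> t" and no_event: "\<forall>e\<in>event_times t. \<not> (a < e \<and> e \<le> b)"
  shows "pend b = pend a"
proof -
  have "arr \<tau> \<le> b \<longleftrightarrow> arr \<tau> \<le> a" if "\<tau> \<in> injected A" for \<tau>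
    using assms arr_mem_event_times[OF that, of t] by (cases "arr \<tau> \<le> a") auto
  moreover have "t1 + cost \<tau> / s \<le> b \<longleftrightarrow> t1 + cost \<tau> / s \<le> a"
    if "(p, t1, \<tau>) \<in> E" "completed A s p t1 \<tau>" for p t1 \<tau>
    using assms completion_mem_event_times[OF that, of t]
    by (cases "t1 + cost \<tau> / s \<le> a") auto
  ultimately show ?thesis unfolding pending_def by (intro Collect_cong conj_cong refl) meson+
qed

lemma pending_before_eq_without_events:
  assumes "a < e" "e \<le> t" and no_event: "\<forall>e'\<in>event_times t. \<not> (a < e' \<and> e' < e)"
  shows "pending_before e = pend a"
proof -
  have "arr \<tau> < e \<longleftrightarrow> arr \<tau> \<le> a" if "\<tau> \<in> injected A" for \<tau>
    using assms arr_mem_event_times[OF that, of t] by (cases "arr \<tau> \<le> a") auto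
  moreover have "t1 + cost \<tau> / s < e \<longleftrightarrow> t1 + cost \<tau> / s \<le> a"
    if "(p, t1, \<tau>) \<in> E" "completed A s p t1 \<tau>" for p t1 \<tau>
    using assms completion_mem_event_times[OF that, of t]
    by (cases "t1 + cost \<tau> / s \<le> a") auto
  ultimately show ?thesis unfolding pending_def pending_before_def by (intro Collect_cong conj_cong refl) meson+
qed

text \<open>
  t0 is the latest event time (or a time before all events) just before which fewer than
  n^2 lmax-tasks were pending; the pending set is constant between events.
\<close>
lemma lmax_overload_start:
  assumes "n ^ 2 \<le> card (pend_lmax t)"
  shows "\<exists>t0 \<le> t. card {\<tau> \<in> pending_before t0. cost \<tau> = lmax} < n ^ 2 \<and> lmax_overloaded t0 t"
proof -
  define m where "m = Min (insert t (event_times t)) - 1"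
  have m_less: "\<forall>e\<in>insert t (event_times t). m < e"
  proof
    fix e assume "e \<in> insert t (event_times t)"
    then have "Min (insert t (event_times t)) \<le> e" using finite_event_times by (intro Min_le) auto
    then show "m < e" by (simp add: m_def)
  qed
  have "\<not> arr \<tau> < m" if "\<tau> \<in> injected A" for \<tau>
  proof
    assume "arr \<tau> < m"
    then have "arr \<tau> \<in> event_times t" using that m_less by (intro arr_mem_event_times) auto
    then show False using m_less \<open>arr \<tau> < m\<close> by force
  qed
  then have "pending_before m = {}" by (auto simp: pending_before_def)
  define C where "C = {e \<in> insert m (event_times t). card {\<tau> \<in> pending_before e. cost \<tau> = lmax} < n ^ 2}"
  have "m \<in> C" using \<open>pending_before m = {}\<close> n_pos by (simp add: C_def)
  moreover have fin_C: "finite C" using finite_event_times by (simp add: C_def)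
  ultimately have t0: "Max C \<in> C" "\<forall>e\<in>C. e \<le> Max C" using Max_in by auto
  have t0t: "Max C \<le> t" using t0(1) m_less event_times_le by (auto simp: C_def)
  have "lmax_overloaded (Max C) t"
    unfolding lmax_overloaded_def
  proof (rule ballI, rule ccontr)
    fix v assume v: "v \<in> {Max C..t}" and few: "\<not> n ^ 2 \<le> card (pend_lmax v)"
    show False
    proof (cases "\<exists>e\<in>event_times t. v < e")
      case True
      define e' where "e' = Min {e \<in> event_times t. v < e}"
      have fin: "finite {e \<in> event_times t. v < e}" using finite_event_times by simp
      have e': "e' \<in> event_times t" "v < e'" using Min_in[OF fin] True by (auto simp: e'_def)
      have "e' \<le> e" if "e \<in> event_times t" "v < e" for e
        using fin that unfolding e'_def by (intro Min_le) auto
      then have "\<forall>e\<in>event_times t. \<not> (v < e \<and> e < e')" by (meson not_le)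
      then have "pending_before e' = pend v"
        using pending_before_eq_without_events e' event_times_le by blast
      then have "e' \<in> C" using few e' by (simp add: C_def)
      then have "e' \<le> Max C" using t0(2) by blast
      then show False using e'(2) v by simp
    next
      case False
      then have "pend t = pend v" using pending_eq_without_events[of v t t] v by auto
      then show False using few assms by simp
    qed
  qed
  then show ?thesis using t0 t0t by (auto simp: C_def)
qed

section \<open>Comparison with the offline execution\<close>

definition lmax_runs :: "real \<Rightarrow> real \<Rightarrow> run set" where
  "lmax_runs t0 t = {(p, u, \<tau>). (p, u, \<tau>) \<in> E \<and> cost \<tau> = lmax \<and> completed A s p u \<tau> \<and>
     t0 \<le> u \<and> u + lmax / s \<le> t}"

definition lmax_arrivals :: "real \<Rightarrow> real \<Rightarrow> task set" where
  "lmax_arrivals t0 t = {\<tau> \<in> injected A. cost \<tau> = lmax \<and> t0 \<le> arr \<tau> \<and> arr \<tau> \<le> t}"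

lemma pending_lmax_old_or_arrived:
  assumes "\<tau> \<in> pend u" "cost \<tau> = lmax" "t0 \<le> u" "u \<le> t"
  shows "\<tau> \<in> {\<tau> \<in> pending_before t0. cost \<tau> = lmax} \<union> lmax_arrivals t0 t"
proof (cases "arr \<tau> < t0")
  case True
  then show ?thesis using assms by (fastforce simp: pending_iff pending_before_def)
next
  case False
  then show ?thesis using assms by (auto simp: pending_iff lmax_arrivals_def)
qed

lemma inj_on_lmax_runs_task:
  assumes "lmax_overloaded t0 t"
  shows "inj_on (\<lambda>(p, u, \<tau>). \<tau>) (lmax_runs t0 t)"
proof (rule inj_onI)
  fix r1 r2 assume r: "r1 \<in> lmax_runs t0 t" "r2 \<in> lmax_runs t0 t"
    "(\<lambda>(p, u, \<tau>). \<tau>) r1 = (\<lambda>(p, u, \<tau>). \<tau>) r2"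
  obtain p u \<tau> where r1: "r1 = (p, u, \<tau>)" by (cases r1) auto
  obtain q v where rr: "r1 = (p, u, \<tau>)" "r2 = (q, v, \<tau>)" using r(3) r1 by (cases r2) auto
  have run1: "(p, u, \<tau>) \<in> E" "cost \<tau> = lmax" "completed A s p u \<tau>" "t0 \<le> u" "u + lmax / s \<le> t"
    and run2: "(q, v, \<tau>) \<in> E" "completed A s q v \<tau>" "t0 \<le> v" "v + lmax / s \<le> t"
    using r(1,2) rr by (simp_all add: lmax_runs_def)
  have "0 < lmax / s" using lmin_pos lmin_less_lmax s_pos by simp
  then have "u \<le> t" "v \<le> t" using run1(5) run2(4) by linarith+
  consider "u \<le> v" | "v \<le> u" by linarith
  then show "r1 = r2"
  proof cases
    case 1
    then show ?thesis
      using lmax_overloaded_run_unique[OF assms run1(1) run2(1) run1(2,3,4) 1 \<open>v \<le> t\<close>] rr by simp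
  next
    case 2
    then show ?thesis
      using lmax_overloaded_run_unique[OF assms run2(1) run1(1) run1(2) run2(2,3) 2 \<open>u \<le> t\<close>] rr by simp
  qed
qed

lemma lmax_runs_task_injected:
  "(p, u, \<tau>) \<in> lmax_runs t0 t \<Longrightarrow> \<tau> \<in> injected A \<and> arr \<tau> \<le> u"
  using run_task_pending[of p u \<tau>] by (simp add: lmax_runs_def pending_iff)

lemma finite_lmax_runs:
  assumes "lmax_overloaded t0 t"
  shows "finite (lmax_runs t0 t)"
proof -
  have "(\<lambda>(p, u, \<tau>). \<tau>) ` lmax_runs t0 t \<subseteq> {\<tau> \<in> injected A. arr \<tau> \<le> t}"
  proof
    fix \<tau> assume "\<tau> \<in> (\<lambda>(p, u, \<tau>). \<tau>) ` lmax_runs t0 t"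
    then obtain p u where run: "(p, u, \<tau>) \<in> lmax_runs t0 t" by auto
    have "0 < lmax / s" using lmin_pos lmin_less_lmax s_pos by simp
    then show "\<tau> \<in> {\<tau> \<in> injected A. arr \<tau> \<le> t}"
      using lmax_runs_task_injected[OF run] run by (auto simp: lmax_runs_def)
  qed
  then show ?thesis
    using finite_injected_upto inj_on_lmax_runs_task[OF assms] finite_subset finite_imageD by blast
qed

lemma finite_lmax_runs_on:
  assumes "lmax_overloaded t0 t"
  shows "finite {(q, u, \<sigma>) \<in> lmax_runs t0 t. q = p}"
  using finite_lmax_runs[OF assms] by (auto intro: finite_subset)

text \<open>Every lmax-task pending at t or completed by a run in \<open>lmax_runs t0 t\<close> was pending
  just before t0 or arrived in [t0, t], and no task is both.\<close>
lemma card_pending_lmax_add_card_lmax_runs: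
  assumes overload: "lmax_overloaded t0 t" and t0t: "t0 \<le> t"
  shows "card (pend_lmax t) + card (lmax_runs t0 t)
    \<le> card {\<tau> \<in> pending_before t0. cost \<tau> = lmax} + card (lmax_arrivals t0 t)"
proof -
  let ?Old = "{\<tau> \<in> pending_before t0. cost \<tau> = lmax}"
  define G where "G = (\<lambda>(p, u, \<tau>). \<tau>) ` lmax_runs t0 t"
  have card_G: "card G = card (lmax_runs t0 t)"
    unfolding G_def using card_image[OF inj_on_lmax_runs_task[OF overload]] .
  have disjoint: "pend_lmax t \<inter> G = {}"
    by (force simp: G_def lmax_runs_def pending_iff)
  have "pend_lmax t \<subseteq> ?Old \<union> lmax_arrivals t0 t"
    using pending_lmax_old_or_arrived t0t by blast
  moreover have "G \<subseteq> ?Old \<union> lmax_arrivals t0 t"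
  proof
    fix x assume "x \<in> G"
    then obtain p u where "(p, u, x) \<in> lmax_runs t0 t" by (auto simp: G_def)
    then have run: "(p, u, x) \<in> E" "cost x = lmax" "t0 \<le> u" "u + lmax / s \<le> t"
      by (simp_all add: lmax_runs_def)
    have "0 < lmax / s" using lmin_pos lmin_less_lmax s_pos by simp
    then have "u \<le> t" using run(4) by linarith
    then show "x \<in> ?Old \<union> lmax_arrivals t0 t"
      using pending_lmax_old_or_arrived[OF run_task_pending[OF run(1)] run(2,3)] by blast
  qed
  moreover have "finite (?Old \<union> lmax_arrivals t0 t)"
    using t0t by (intro finite_subset[OF _ finite_injected_upto[of t]])
      (auto simp: pending_before_def lmax_arrivals_def)
  ultimately have "card (pend_lmax t \<union> G) \<le> card (?Old \<union> lmax_arrivals t0 t)"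
    by (intro card_mono) auto
  moreover have "finite (pend_lmax t)" "finite G"
    using finite_pending finite_lmax_runs[OF overload] by (simp_all add: G_def)
  ultimately show ?thesis
    using card_Un_disjoint[OF _ _ disjoint] card_Un_le[of ?Old "lmax_arrivals t0 t"] card_G
    by linarith
qed

text \<open>
  OPT's lmax-runs on p are lmax apart; each starting after \<open>t0 + lmax/s\<close> has its
  own Burst lmax-run on p completing within it, and at most one starts before.
\<close>
lemma card_offline_lmax_runs_on_processor:
  assumes offline: "offline_exec n A X" and overload: "lmax_overloaded t0 t"
    and p: "p \<in> {1..n}" and fin: "finite T"
    and T: "\<And>\<tau>. \<tau> \<in> T \<Longrightarrow> (p, w \<tau>, \<tau>) \<in> X \<and> w \<tau> + cost \<tau> \<le> t \<and> cost \<tau> = lmax \<and> t0 \<le> w \<tau>"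
  shows "card T \<le> card {(q, u, \<sigma>) \<in> lmax_runs t0 t. q = p} + 1"
proof -
  have lmax_s: "lmax / s < lmax" using speedup lmin_less_lmax lmin_pos by (simp add: divide_less_eq)
  have apart: "w \<tau>1 + lmax \<le> w \<tau>2 \<or> w \<tau>2 + lmax \<le> w \<tau>1"
    if "\<tau>1 \<in> T" "\<tau>2 \<in> T" "\<tau>1 \<noteq> \<tau>2" for \<tau>1 \<tau>2
    using offline_run(3)[OF offline, of p "w \<tau>1" \<tau>1 "w \<tau>2" \<tau>2] T[OF that(1)] T[OF that(2)] that(3)
    by auto
  define Late where "Late = {\<tau> \<in> T. t0 + lmax / s \<le> w \<tau>}"
  have "\<forall>a\<in>T - Late. \<forall>b\<in>T - Late. a = b"
  proof (intro ballI, rule ccontr)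
    fix a b assume ab: "a \<in> T - Late" "b \<in> T - Late" "a \<noteq> b"
    then have "w a < t0 + lmax / s" "w b < t0 + lmax / s" "t0 \<le> w a" "t0 \<le> w b"
      using T by (auto simp: Late_def)
    then show False using apart[of a b] ab lmax_s by auto
  qed
  then have "card (T - Late) \<le> 1" using card_le_Suc0_iff_eq[of "T - Late"] fin by simp
  moreover have "card Late \<le> card {(q, u, \<sigma>) \<in> lmax_runs t0 t. q = p}"
  proof -
    have "\<forall>\<tau>\<in>Late. \<exists>r. (p, fst r, snd r) \<in> lmax_runs t0 t \<and>
        w \<tau> < fst r + lmax / s \<and> fst r + lmax / s \<le> w \<tau> + lmax"
    proof
      fix \<tau> assume "\<tau> \<in> Late"
      then have "\<tau> \<in> T" "t0 + lmax / s \<le> w \<tau>" by (simp_all add: Late_def)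
      then have \<tau>: "(p, w \<tau>, \<tau>) \<in> X" "w \<tau> + lmax \<le> t" "cost \<tau> = lmax" "t0 + lmax / s \<le> w \<tau>"
        using T[of \<tau>] by auto
      then have "\<forall>x\<in>{w \<tau>..w \<tau> + lmax}. alive A p x"
        using offline_run(2)[OF offline \<tau>(1)] by (simp add: completed_def)
      then obtain u \<sigma> where "(p, u, \<sigma>) \<in> E" "cost \<sigma> = lmax" "completed A s p u \<sigma>" "t0 \<le> u"
        "w \<tau> < u + lmax / s" "u + lmax / s \<le> w \<tau> + lmax"
        using lmax_completion_within_lmax[OF overload p _ \<tau>(4,2)] by blast
      then show "\<exists>r. (p, fst r, snd r) \<in> lmax_runs t0 t \<and>
          w \<tau> < fst r + lmax / s \<and> fst r + lmax / s \<le> w \<tau> + lmax"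
        using \<tau>(2) by (intro exI[of _ "(u, \<sigma>)"]) (simp add: lmax_runs_def)
    qed
    from bchoice[OF this] obtain r where "\<forall>\<tau>\<in>Late. (p, fst (r \<tau>), snd (r \<tau>)) \<in> lmax_runs t0 t \<and>
        w \<tau> < fst (r \<tau>) + lmax / s \<and> fst (r \<tau>) + lmax / s \<le> w \<tau> + lmax"
      by blast
    then have matched: "\<And>\<tau>. \<tau> \<in> Late \<Longrightarrow> (p, fst (r \<tau>), snd (r \<tau>)) \<in> lmax_runs t0 t \<and>
        w \<tau> < fst (r \<tau>) + lmax / s \<and> fst (r \<tau>) + lmax / s \<le> w \<tau> + lmax"
      by blast
    have "inj_on (\<lambda>\<tau>. (p, fst (r \<tau>), snd (r \<tau>))) Late"
    proof (rule inj_onI, rule ccontr)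
      fix a b assume ab: "a \<in> Late" "b \<in> Late" "(p, fst (r a), snd (r a)) = (p, fst (r b), snd (r b))"
        "a \<noteq> b"
      then have "w a + lmax \<le> w b \<or> w b + lmax \<le> w a" using apart by (auto simp: Late_def)
      then show False using matched[OF ab(1)] matched[OF ab(2)] ab(3) by auto
    qed
    moreover have "(\<lambda>\<tau>. (p, fst (r \<tau>), snd (r \<tau>))) ` Late \<subseteq> {(q, u, \<sigma>) \<in> lmax_runs t0 t. q = p}"
      using matched by auto
    ultimately show ?thesis using finite_lmax_runs_on[OF overload] by (rule card_inj_on_le)
  qed
  moreover have "T = Late \<union> (T - Late)" by (auto simp: Late_def)
  then have "card T \<le> card Late + card (T - Late)" by (metis card_Un_le)
  ultimately show ?thesis by linarith
qed

lemma card_offline_completed_lmax_arrivals: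
  assumes offline: "offline_exec n A X" and overload: "lmax_overloaded t0 t"
  shows "card {\<tau> \<in> lmax_arrivals t0 t. \<tau> \<notin> pending A 1 X t} \<le> card (lmax_runs t0 t) + n"
proof -
  define T where "T = {\<tau> \<in> lmax_arrivals t0 t. \<tau> \<notin> pending A 1 X t}"
  have "\<forall>\<tau>\<in>T. \<exists>r. (fst r, snd r, \<tau>) \<in> X \<and> snd r + cost \<tau> \<le> t \<and> cost \<tau> = lmax \<and> t0 \<le> snd r"
  proof
    fix \<tau> assume "\<tau> \<in> T"
    then have \<tau>: "\<tau> \<in> injected A" "arr \<tau> \<le> t" "cost \<tau> = lmax" "t0 \<le> arr \<tau>" "\<tau> \<notin> pending A 1 X t"
      by (auto simp: T_def lmax_arrivals_def)
    then obtain q w where run: "(q, w, \<tau>) \<in> X" "w + cost \<tau> \<le> t"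
      unfolding pending_def by auto
    then have "\<tau> \<in> pending A 1 X w" using offline unfolding offline_exec_def by blast
    then have "arr \<tau> \<le> w" by (simp add: pending_def)
    then show "\<exists>r. (fst r, snd r, \<tau>) \<in> X \<and> snd r + cost \<tau> \<le> t \<and> cost \<tau> = lmax \<and> t0 \<le> snd r"
      using run \<tau>(3,4) by (intro exI[of _ "(q, w)"]) simp
  qed
  from bchoice[OF this] obtain r where "\<forall>\<tau>\<in>T. (fst (r \<tau>), snd (r \<tau>), \<tau>) \<in> X \<and>
      snd (r \<tau>) + cost \<tau> \<le> t \<and> cost \<tau> = lmax \<and> t0 \<le> snd (r \<tau>)"
    by blast
  then have offline_runs: "\<And>\<tau>. \<tau> \<in> T \<Longrightarrow> (fst (r \<tau>), snd (r \<tau>), \<tau>) \<in> X \<and>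
      snd (r \<tau>) + cost \<tau> \<le> t \<and> cost \<tau> = lmax \<and> t0 \<le> snd (r \<tau>)"
    by blast
  have fin_T: "finite T"
    by (rule finite_subset[OF _ finite_injected_upto[of t]]) (auto simp: T_def lmax_arrivals_def)
  let ?on = "\<lambda>p. {\<tau> \<in> T. fst (r \<tau>) = p}"
  let ?runs_on = "\<lambda>p. {(q, u, \<sigma>) \<in> lmax_runs t0 t. q = p}"
  have "T \<subseteq> (\<Union>p\<in>{1..n}. ?on p)"
  proof
    fix \<tau> assume "\<tau> \<in> T"
    then have "fst (r \<tau>) \<in> {1..n}" using offline_run(1)[OF offline] offline_runs by blast
    then show "\<tau> \<in> (\<Union>p\<in>{1..n}. ?on p)" using \<open>\<tau> \<in> T\<close> by blast
  qed
  then have "card T \<le> card (\<Union>p\<in>{1..n}. ?on p)" using fin_T by (intro card_mono) auto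
  also have "\<dots> \<le> (\<Sum>p\<in>{1..n}. card (?on p))" by (rule card_UN_le) simp
  also have "\<dots> \<le> (\<Sum>p\<in>{1..n}. card (?runs_on p) + 1)"
  proof (rule sum_mono)
    fix p assume p: "p \<in> {1..n}"
    have "finite (?on p)" using fin_T by simp
    moreover have "\<And>\<tau>. \<tau> \<in> ?on p \<Longrightarrow> (p, snd (r \<tau>), \<tau>) \<in> X \<and> snd (r \<tau>) + cost \<tau> \<le> t \<and>
        cost \<tau> = lmax \<and> t0 \<le> snd (r \<tau>)"
      using offline_runs by force
    ultimately show "card (?on p) \<le> card (?runs_on p) + 1"
      by (rule card_offline_lmax_runs_on_processor[OF offline overload p])
  qed
  also have "\<dots> = (\<Sum>p\<in>{1..n}. card (?runs_on p)) + n" by (subst sum.distrib) simp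
  also have "(\<Sum>p\<in>{1..n}. card (?runs_on p)) = card (\<Union>p\<in>{1..n}. ?runs_on p)"
    using finite_lmax_runs_on[OF overload] by (intro card_UN_disjoint[symmetric]) auto
  also have "(\<Union>p\<in>{1..n}. ?runs_on p) = lmax_runs t0 t"
    using run_conditions(1) by (auto simp: lmax_runs_def)
  finally show ?thesis by (simp add: T_def)
qed

lemma card_pending_lmax_le_offline:
  assumes offline: "offline_exec n A X"
  shows "card (pend_lmax t) \<le> card {\<tau> \<in> pending A 1 X t. cost \<tau> = lmax} + n ^ 2 + n"
proof (cases "card (pend_lmax t) < n ^ 2")
  case False
  then obtain t0 where t0t: "t0 \<le> t" and old: "card {\<tau> \<in> pending_before t0. cost \<tau> = lmax} < n ^ 2"
    and overload: "lmax_overloaded t0 t"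
    using lmax_overload_start[of t] by auto
  let ?PX = "{\<tau> \<in> pending A 1 X t. cost \<tau> = lmax}"
    and ?done = "{\<tau> \<in> lmax_arrivals t0 t. \<tau> \<notin> pending A 1 X t}"
  have "finite ?PX"
    by (rule finite_subset[OF _ finite_injected_upto[of t]]) (auto simp: pending_def)
  moreover have "finite ?done"
    by (rule finite_subset[OF _ finite_injected_upto[of t]]) (auto simp: lmax_arrivals_def)
  ultimately have "card (lmax_arrivals t0 t) \<le> card (?PX \<union> ?done)"
    by (intro card_mono) (auto simp: lmax_arrivals_def)
  also have "\<dots> \<le> card ?PX + card ?done" by (rule card_Un_le)
  finally show ?thesis
    using card_pending_lmax_add_card_lmax_runs[OF overload t0t]
      card_offline_completed_lmax_arrivals[OF offline overload] old
    by linarith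
qed simp

end

theorem lemma13:
  fixes n \<gamma> :: nat and lmin lmax s t :: real and A :: pattern and E X :: "run set"
  assumes "n \<ge> 1"
    and "0 < lmin" and "lmin < lmax"
    and "s > 1"
    and "\<gamma> = nat \<lceil>(lmax - s * lmin) / ((s - 1) * lmin)\<rceil>"
    and "s \<ge> (real \<gamma> * lmin + lmax) / lmax"
    and "wf_pattern A"
    and "\<forall>\<tau> \<in> injected A. cost \<tau> = lmin \<or> cost \<tau> = lmax"
    and "burst_exec n \<gamma> lmin lmax s A E"
    and "offline_exec n A X"
  shows "card {\<tau> \<in> pending A s E t. cost \<tau> = lmax}
           \<le> card {\<tau> \<in> pending A 1 X t. cost \<tau> = lmax} + n ^ 2 + 2 * n"
proof -
  interpret burst_execution n \<gamma> lmin lmax s A E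
    using assms by unfold_locales auto
  show ?thesis
    using card_pending_lmax_le_offline[OF assms(10), of t] by linarith
qed

end
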